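(* Let $M$ be a matroid on a nonempty finite set $S$. Then $M$ is irreducible with respect to free product if and only if $M$ has no free separator other than $\emptyset$ and $S$.
   Context: For a matroid $M$ on $S$ write $\rho_M$ for its rank function, $\rho(M)=\rho_M(S)$, $\nu_M(A)=|A|-\rho_M(A)$, $\lambda_M(A)=\rho(M)-\rho_M(A)$. For matroids $M$ on $S$ and $N$ on $T$ with $S\cap T=\emptyset$, the free product $M\mathbin{\Box} N$ is the matroid on $S\cup T$ whose independent sets are those $A$ with $A\cap S$ independent in $M$ and $\lambda_M(A\cap S)\geq\nu_N(A\cap T)$; it is associative. A nonempty matroid $M$ is irreducible if every factorization of $M$ as a free product of matroids contains $M$ itself as a factor. A cyclic flat is a flat that is a union of circuits. A subset $A\subseteq S$ is a free separator of $M$ if every cyclic flat of $M$ is comparable to $A$ by inclusion. *)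

theory Defs
  imports Main
begin

type_synonym 'a matroid = "'a set \<times> 'a set set"

definition ground :: "'a matroid \<Rightarrow> 'a set" where
  "ground M = fst M"

definition indeps :: "'a matroid \<Rightarrow> 'a set set" where
  "indeps M = snd M"

definition is_matroid :: "'a matroid \<Rightarrow> bool" where
  "is_matroid M \<longleftrightarrow> finite (ground M) \<and>
     (\<forall>X \<in> indeps M. X \<subseteq> ground M) \<and>
     {} \<in> indeps M \<and>
     (\<forall>X Y. Y \<in> indeps M \<longrightarrow> X \<subseteq> Y \<longrightarrow> X \<in> indeps M) \<and>
     (\<forall>X Y. X \<in> indeps M \<longrightarrow> Y \<in> indeps M \<longrightarrow> card X < card Y \<longrightarrow>
        (\<exists>y \<in> Y - X. insert y X \<in> indeps M))"

definition rk :: "'a matroid \<Rightarrow> 'a set \<Rightarrow> nat" where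
  "rk M A = Max (card ` {X \<in> indeps M. X \<subseteq> A})"

definition nullity :: "'a matroid \<Rightarrow> 'a set \<Rightarrow> int" where
  "nullity M A = int (card A) - int (rk M A)"

definition corank_lambda :: "'a matroid \<Rightarrow> 'a set \<Rightarrow> int" where
  "corank_lambda M A = int (rk M (ground M)) - int (rk M A)"

definition free_product :: "'a matroid \<Rightarrow> 'a matroid \<Rightarrow> 'a matroid" where
  "free_product M N =
     (ground M \<union> ground N,
      {A. A \<subseteq> ground M \<union> ground N \<and> A \<inter> ground M \<in> indeps M \<and>
          corank_lambda M (A \<inter> ground M) \<ge> nullity N (A \<inter> ground N)})"

definition empty_matroid :: "'a matroid" where
  "empty_matroid = ({}, {{}})"

text \<open>Free product of a list of factors (associative, with the empty matroid as unit).\<close>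
definition free_product_list :: "'a matroid list \<Rightarrow> 'a matroid" where
  "free_product_list Ns = foldr free_product Ns empty_matroid"

definition irreducible_fp :: "'a matroid \<Rightarrow> bool" where
  "irreducible_fp M \<longleftrightarrow> ground M \<noteq> {} \<and>
     (\<forall>Ns. (\<forall>N \<in> set Ns. is_matroid N) \<longrightarrow>
           (\<forall>i < length Ns. \<forall>j < length Ns. i \<noteq> j \<longrightarrow> ground (Ns ! i) \<inter> ground (Ns ! j) = {}) \<longrightarrow>
           free_product_list Ns = M \<longrightarrow> M \<in> set Ns)"

definition circuit :: "'a matroid \<Rightarrow> 'a set \<Rightarrow> bool" where
  "circuit M C \<longleftrightarrow> C \<subseteq> ground M \<and> C \<notin> indeps M \<and> (\<forall>D. D \<subset> C \<longrightarrow> D \<in> indeps M)"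

definition flat :: "'a matroid \<Rightarrow> 'a set \<Rightarrow> bool" where
  "flat M F \<longleftrightarrow> F \<subseteq> ground M \<and> (\<forall>x \<in> ground M - F. rk M (insert x F) > rk M F)"

definition cyclic_flat :: "'a matroid \<Rightarrow> 'a set \<Rightarrow> bool" where
  "cyclic_flat M F \<longleftrightarrow> flat M F \<and> (\<exists>\<C>. (\<forall>C \<in> \<C>. circuit M C) \<and> F = \<Union>\<C>)"

definition free_separator :: "'a matroid \<Rightarrow> 'a set \<Rightarrow> bool" where
  "free_separator M A \<longleftrightarrow> A \<subseteq> ground M \<and>
     (\<forall>F. cyclic_flat M F \<longrightarrow> F \<subseteq> A \<or> A \<subseteq> F)"

end

theory Submission
  imports Defs
begin

text \<open>If \<open>A\<close> is a free separator of \<open>M\<close>, then every circuit of \<open>M\<close> not contained in \<open>A\<close> has a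
  closure, which is a cyclic flat, containing \<open>A\<close>. This bounds the rank of what a dependent set adds
  to a basis of \<open>A\<close> and shows \<open>M = M|A \<box> M/A\<close>, so a nontrivial free separator yields a nontrivial
  factorisation. Conversely, in \<open>N \<box> R\<close> every circuit meeting the ground set of \<open>R\<close> spans the
  whole ground set of \<open>N\<close>, so the ground set of the first factor is a free separator, and
  induction along a factorisation shows that a reducible matroid has a nontrivial one.\<close>

lemma ground_pair [simp]: "ground (E, I) = E"
  by (simp add: ground_def)

lemma indeps_pair [simp]: "indeps (E, I) = I"
  by (simp add: indeps_def)

lemma matroid_eqI: "ground M = ground N \<Longrightarrow> indeps M = indeps N \<Longrightarrow> M = N"
  by (simp add: ground_def indeps_def prod_eq_iff)

subsection \<open>Independence systems and matroids\<close>

text \<open>Free products of matroids are matroids, but the argument only needs the independence-system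
  axioms, which pass through free products much more easily.\<close>
locale indep_system =
  fixes M :: "'a matroid"
  assumes finite_ground: "finite (ground M)"
    and indep_subset_ground: "X \<in> indeps M \<Longrightarrow> X \<subseteq> ground M"
    and empty_indep: "{} \<in> indeps M"
    and indep_subset: "Y \<in> indeps M \<Longrightarrow> X \<subseteq> Y \<Longrightarrow> X \<in> indeps M"
begin

lemma finite_indep: "X \<in> indeps M \<Longrightarrow> finite X"
  using finite_ground indep_subset_ground finite_subset by blast

lemma finite_card_indeps_within: "finite (card ` {X \<in> indeps M. X \<subseteq> A})"
proof -
  have "{X \<in> indeps M. X \<subseteq> A} \<subseteq> Pow (ground M)"
    using indep_subset_ground by blast
  then show ?thesis
    using finite_ground by (meson finite_Pow_iff finite_imageI finite_subset)
qed

lemma card_le_rk: "X \<in> indeps M \<Longrightarrow> X \<subseteq> A \<Longrightarrow> card X \<le> rk M A"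
  unfolding rk_def by (rule Max_ge[OF finite_card_indeps_within]) auto

lemma obtain_rk_indep:
  obtains X where "X \<in> indeps M" "X \<subseteq> A" "card X = rk M A"
proof -
  have "rk M A \<in> card ` {X \<in> indeps M. X \<subseteq> A}"
    unfolding rk_def using empty_indep by (intro Max_in finite_card_indeps_within) auto
  then show ?thesis
    using that by auto
qed

lemma rk_mono: "rk M A \<le> rk M B" if "A \<subseteq> B"
proof -
  obtain X where "X \<in> indeps M" "X \<subseteq> A" "card X = rk M A"
    by (rule obtain_rk_indep)
  then show ?thesis
    using card_le_rk[of X B] that by simp
qed

lemma rk_le_card: "rk M A \<le> card A" if "finite A"
proof -
  obtain X where "X \<subseteq> A" "card X = rk M A"
    by (rule obtain_rk_indep)
  then show ?thesis
    using card_mono[OF that \<open>X \<subseteq> A\<close>] by simp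
qed

lemma rk_indep: "X \<in> indeps M \<Longrightarrow> rk M X = card X"
  by (simp add: card_le_rk finite_indep le_antisym rk_le_card)

lemma indep_if_card_le_rk: "A \<in> indeps M" if "finite A" "card A \<le> rk M A"
proof -
  obtain X where "X \<in> indeps M" "X \<subseteq> A" "card X = rk M A"
    by (rule obtain_rk_indep)
  moreover have "X = A"
    using card_subset_eq[OF that(1) \<open>X \<subseteq> A\<close>] card_mono[OF that(1) \<open>X \<subseteq> A\<close>] calculation that(2)
    by simp
  ultimately show ?thesis
    by simp
qed

lemma rk_Un_le: "rk M (A \<union> E) \<le> rk M A + card E" if "finite E"
proof -
  obtain X where X: "X \<in> indeps M" "X \<subseteq> A \<union> E" "card X = rk M (A \<union> E)"
    by (rule obtain_rk_indep)
  have "X \<subseteq> (X - E) \<union> E"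
    by blast
  then have "card X \<le> card ((X - E) \<union> E)"
    using finite_indep[OF X(1)] that by (intro card_mono) auto
  also have "\<dots> \<le> card (X - E) + card E"
    by (rule card_Un_le)
  also have "\<dots> \<le> rk M A + card E"
    using card_le_rk[OF indep_subset[OF X(1)], of "X - E" A] X(2) by auto
  finally show ?thesis
    using X(3) by simp
qed

lemma nullity_mono: "nullity M A \<le> nullity M B" if "finite B" "A \<subseteq> B"
proof -
  have "rk M B \<le> rk M A + card (B - A)" and "card (B - A) = card B - card A"
    and "card A \<le> card B"
    using that rk_Un_le[of "B - A" A] by (auto simp: Un_absorb1 card_Diff_subset finite_subset card_mono)
  then show ?thesis
    unfolding nullity_def by linarith
qed

end

locale matroid = indep_system +
  assumes augment:
    "X \<in> indeps M \<Longrightarrow> Y \<in> indeps M \<Longrightarrow> card X < card Y \<Longrightarrow> \<exists>y \<in> Y - X. insert y X \<in> indeps M"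

lemma is_matroid_iff_matroid: "is_matroid M \<longleftrightarrow> matroid M"
  unfolding is_matroid_def matroid_def matroid_axioms_def indep_system_def
  by (intro iffI; elim conjE; intro conjI; blast)

definition cl :: "'a matroid \<Rightarrow> 'a set \<Rightarrow> 'a set" where
  "cl M X = {e \<in> ground M. rk M (insert e X) = rk M X}"

lemma cl_subset_ground: "cl M X \<subseteq> ground M"
  by (auto simp: cl_def)

lemma subset_cl: "X \<subseteq> ground M \<Longrightarrow> X \<subseteq> cl M X"
  by (auto simp: cl_def insert_absorb)

context matroid
begin

lemma augment_to_card:
  assumes "J \<in> indeps M" "Z \<in> indeps M"
  shows "\<exists>J'. J \<subseteq> J' \<and> J' \<subseteq> J \<union> Z \<and> J' \<in> indeps M \<and> card Z \<le> card J'"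
  using assms(1)
proof (induction "card Z - card J" arbitrary: J rule: less_induct)
  case less
  show ?case
  proof (cases "card Z \<le> card J")
    case True
    then show ?thesis
      using less.prems by blast
  next
    case False
    then obtain y where y: "y \<in> Z - J" "insert y J \<in> indeps M"
      using augment[OF less.prems assms(2)] by auto
    have "card Z - card (insert y J) < card Z - card J"
      using y False finite_indep[OF less.prems] by simp
    from less.hyps[OF this y(2)] show ?thesis
      using y by blast
  qed
qed

lemma exists_circuit_subset:
  "D \<subseteq> ground M \<Longrightarrow> D \<notin> indeps M \<Longrightarrow> \<exists>C \<subseteq> D. circuit M C"
proof (induction "card D" arbitrary: D rule: less_induct)
  case less
  show ?case
  proof (cases "\<forall>D'. D' \<subset> D \<longrightarrow> D' \<in> indeps M")
    case True
    then have "circuit M D"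
      using less.prems by (simp add: circuit_def)
    then show ?thesis
      by blast
  next
    case False
    then obtain D' where D': "D' \<subset> D" "D' \<notin> indeps M"
      by blast
    have "finite D"
      using less.prems(1) finite_ground finite_subset by blast
    then have "card D' < card D"
      using D'(1) by (rule psubset_card_mono)
    then obtain C where "C \<subseteq> D'" "circuit M C"
      using less.hyps[of D'] less.prems(1) D' by blast
    then show ?thesis
      using D'(1) by blast
  qed
qed

lemma circuit_nonempty: "circuit M C \<Longrightarrow> C \<noteq> {}"
  using empty_indep by (auto simp: circuit_def)

lemma finite_circuit: "circuit M C \<Longrightarrow> finite C"
  using finite_ground finite_subset by (auto simp: circuit_def)

lemma rk_circuit: "rk M C = card C - 1" if C: "circuit M C"
proof -
  obtain c where "c \<in> C"
    using circuit_nonempty[OF C] by blast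
  then have "card C - 1 \<le> rk M C"
    using C card_le_rk[of "C - {c}" C] finite_circuit[OF C] by (auto simp: circuit_def)
  moreover have "rk M C < card C"
    using C rk_le_card[of C] indep_if_card_le_rk[of C] finite_circuit[OF C]
    by (force simp: circuit_def)
  ultimately show ?thesis
    by linarith
qed

lemma rk_cl: "rk M (cl M X) = rk M X" if "X \<subseteq> ground M"
proof (rule ccontr)
  assume "rk M (cl M X) \<noteq> rk M X"
  then have less: "rk M X < rk M (cl M X)"
    using rk_mono[OF subset_cl[OF that]] by linarith
  obtain J where J: "J \<in> indeps M" "J \<subseteq> X" "card J = rk M X"
    by (rule obtain_rk_indep)
  obtain J' where J': "J' \<in> indeps M" "J' \<subseteq> cl M X" "card J' = rk M (cl M X)"
    by (rule obtain_rk_indep)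
  obtain y where y: "y \<in> J' - J" "insert y J \<in> indeps M"
    using augment[OF J(1) J'(1)] less J(3) J'(3) by auto
  have "card (insert y J) \<le> rk M (insert y X)"
    using J(2) by (intro card_le_rk[OF y(2)]) auto
  also have "\<dots> = rk M X"
    using y J' by (auto simp: cl_def)
  finally show False
    using y finite_indep[OF J(1)] J(3) by simp
qed

lemma flat_cl: "flat M (cl M X)" if "X \<subseteq> ground M"
  unfolding flat_def
proof (intro conjI ballI)
  fix x
  assume x: "x \<in> ground M - cl M X"
  have "rk M X < rk M (insert x X)"
    using x rk_mono[of X "insert x X"] by (fastforce simp: cl_def)
  also have "\<dots> \<le> rk M (insert x (cl M X))"
    using subset_cl[OF that] by (intro rk_mono) auto
  finally show "rk M (cl M X) < rk M (insert x (cl M X))"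
    using rk_cl[OF that] by simp
qed (rule cl_subset_ground)

lemma obtain_circuit_in_cl:
  assumes "X \<subseteq> ground M" "e \<in> cl M X" "e \<notin> X"
  obtains D where "circuit M D" "e \<in> D" "D \<subseteq> insert e X"
proof -
  obtain J where J: "J \<in> indeps M" "J \<subseteq> X" "card J = rk M X"
    by (rule obtain_rk_indep)
  have dep: "insert e J \<notin> indeps M"
  proof
    assume "insert e J \<in> indeps M"
    then have "card (insert e J) \<le> rk M (insert e X)"
      using J(2) by (intro card_le_rk) auto
    moreover have "e \<notin> J"
      using assms(3) J(2) by blast
    ultimately show False
      using assms(2) J(3) finite_indep[OF J(1)] by (simp add: cl_def)
  qed
  have "insert e J \<subseteq> ground M"
    using assms(1,2) J(2) cl_subset_ground[of M X] by blast
  then obtain D where D: "D \<subseteq> insert e J" "circuit M D"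
    using exists_circuit_subset[OF _ dep] by blast
  have "e \<in> D"
  proof (rule ccontr)
    assume "e \<notin> D"
    then have "D \<in> indeps M"
      using D(1) by (intro indep_subset[OF J(1)]) blast
    then show False
      using D(2) by (simp add: circuit_def)
  qed
  moreover have "D \<subseteq> insert e X"
    using D(1) J(2) by blast
  ultimately show ?thesis
    using that D(2) by blast
qed

lemma cyclic_flat_cl_circuit: "cyclic_flat M (cl M C)" if "circuit M C"
proof -
  have C: "C \<subseteq> ground M"
    using that by (simp add: circuit_def)
  let ?\<C> = "{D. circuit M D \<and> D \<subseteq> cl M C}"
  have "cl M C \<subseteq> \<Union>?\<C>"
  proof
    fix e
    assume e: "e \<in> cl M C"
    show "e \<in> \<Union>?\<C>"
    proof (cases "e \<in> C")
      case True
      moreover have "C \<in> ?\<C>"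
        using that subset_cl[OF C] by simp
      ultimately show ?thesis
        by blast
    next
      case False
      then obtain D where D: "circuit M D" "e \<in> D" "D \<subseteq> insert e C"
        using obtain_circuit_in_cl[OF C e] by blast
      then have "D \<in> ?\<C>"
        using e subset_cl[OF C] by blast
      then show ?thesis
        using D(2) by blast
    qed
  qed
  then have "cl M C = \<Union>?\<C>"
    by blast
  moreover have "\<forall>D \<in> ?\<C>. circuit M D"
    by simp
  ultimately show ?thesis
    unfolding cyclic_flat_def using flat_cl[OF C] by blast
qed

end

subsection \<open>Restriction and contraction\<close>

definition restriction :: "'a matroid \<Rightarrow> 'a set \<Rightarrow> 'a matroid" where
  "restriction M A = (A, {X \<in> indeps M. X \<subseteq> A})"

text \<open>For a basis \<open>B\<close> of \<open>A\<close>, this is the contraction \<open>M/A\<close>.\<close>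
definition contraction :: "'a matroid \<Rightarrow> 'a set \<Rightarrow> 'a set \<Rightarrow> 'a matroid" where
  "contraction M A B = (ground M - A, {Y. Y \<subseteq> ground M - A \<and> Y \<union> B \<in> indeps M})"

lemma ground_restriction [simp]: "ground (restriction M A) = A"
  and indeps_restriction: "X \<in> indeps (restriction M A) \<longleftrightarrow> X \<in> indeps M \<and> X \<subseteq> A"
  and ground_contraction [simp]: "ground (contraction M A B) = ground M - A"
  by (simp_all add: restriction_def contraction_def)

lemma rk_restriction: "rk (restriction M A) X = rk M X" if "X \<subseteq> A"
proof -
  have "{Y \<in> indeps (restriction M A). Y \<subseteq> X} = {Y \<in> indeps M. Y \<subseteq> X}"
    using that by (auto simp: restriction_def)
  then show ?thesis
    by (simp add: rk_def)
qed

context matroid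
begin

lemma matroid_restriction: "matroid (restriction M A)" if "A \<subseteq> ground M"
proof unfold_locales
  fix X Y
  assume "X \<in> indeps (restriction M A)" "Y \<in> indeps (restriction M A)" "card X < card Y"
  then show "\<exists>y\<in>Y - X. insert y X \<in> indeps (restriction M A)"
    using augment[of X Y] by (fastforce simp: restriction_def)
qed (use that finite_ground finite_subset empty_indep indep_subset in \<open>auto simp: restriction_def\<close>)

lemma matroid_contraction: "matroid (contraction M A B)" if B: "B \<in> indeps M" "B \<subseteq> A"
proof unfold_locales
  fix X Y
  assume "X \<in> indeps (contraction M A B)" "Y \<in> indeps (contraction M A B)" "card X < card Y"
  then have X: "X \<subseteq> ground M - A" "X \<union> B \<in> indeps M" and Y: "Y \<subseteq> ground M - A" "Y \<union> B \<in> indeps M"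
    and "card X < card Y"
    by (auto simp: contraction_def)
  then have "card (X \<union> B) < card (Y \<union> B)"
    using B finite_indep by (subst (1 2) card_Un_disjoint) auto
  then obtain y where "y \<in> (Y \<union> B) - (X \<union> B)" "insert y (X \<union> B) \<in> indeps M"
    using augment[OF X(2) Y(2)] by blast
  then show "\<exists>y\<in>Y - X. insert y X \<in> indeps (contraction M A B)"
    using X Y by (auto simp: contraction_def)
next
  fix X Y
  assume "Y \<in> indeps (contraction M A B)" "X \<subseteq> Y"
  then show "X \<in> indeps (contraction M A B)"
    using indep_subset[of "Y \<union> B" "X \<union> B"] by (auto simp: contraction_def)
qed (use that finite_ground in \<open>auto simp: contraction_def\<close>)

lemma rk_contraction:
  assumes B: "B \<in> indeps M" "B \<subseteq> A" and Y: "Y \<subseteq> ground M - A"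
  shows "rk (contraction M A B) Y = rk M (Y \<union> B) - card B"
proof (rule antisym)
  interpret contr: matroid "contraction M A B"
    using matroid_contraction[OF B] .
  obtain Y' where Y': "Y' \<in> indeps (contraction M A B)" "Y' \<subseteq> Y" "card Y' = rk (contraction M A B) Y"
    by (rule contr.obtain_rk_indep)
  then have "Y' \<union> B \<in> indeps M" "Y' \<inter> B = {}"
    using B(2) by (auto simp: contraction_def)
  then have "card Y' + card B \<le> rk M (Y \<union> B)"
    using card_le_rk[of "Y' \<union> B" "Y \<union> B"] Y'(2) finite_indep card_Un_disjoint by fastforce
  then show "rk (contraction M A B) Y \<le> rk M (Y \<union> B) - card B"
    using Y'(3) by linarith
  obtain W where W: "W \<in> indeps M" "W \<subseteq> Y \<union> B" "card W = rk M (Y \<union> B)"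
    by (rule obtain_rk_indep)
  obtain J where J: "B \<subseteq> J" "J \<subseteq> B \<union> W" "J \<in> indeps M" "card W \<le> card J"
    using augment_to_card[OF B(1) W(1)] by blast
  have "J - B \<in> indeps (contraction M A B)"
    using J W(2) Y by (auto simp: contraction_def Un_absorb2)
  then have "card (J - B) \<le> rk (contraction M A B) Y"
    using J(2) W(2) by (intro contr.card_le_rk) auto
  moreover have "card (J - B) = card J - card B"
    using J(1) finite_indep[OF B(1)] by (rule card_Diff_subset[rotated])
  ultimately show "rk M (Y \<union> B) - card B \<le> rk (contraction M A B) Y"
    using J(4) W(3) by linarith
qed

end

subsection \<open>Free products\<close>

lemma card_Int_disjoint_Un:
  assumes "finite Z" "Z \<subseteq> S \<union> T" "S \<inter> T = {}"
  shows "card Z = card (Z \<inter> S) + card (Z \<inter> T)"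
proof -
  have "Z - S = Z \<inter> T"
    using assms(2,3) by blast
  then show ?thesis
    using card_Int_Diff[OF assms(1), of S] by simp
qed

lemma ground_free_product [simp]: "ground (free_product N R) = ground N \<union> ground R"
  by (simp add: free_product_def)

lemma indeps_free_product:
  "Z \<in> indeps (free_product N R) \<longleftrightarrow> Z \<subseteq> ground N \<union> ground R \<and> Z \<inter> ground N \<in> indeps N \<and>
     nullity R (Z \<inter> ground R) \<le> corank_lambda N (Z \<inter> ground N)"
  by (simp add: free_product_def)

lemma indep_system_free_product:
  assumes N: "indep_system N" and R: "indep_system R"
  shows "indep_system (free_product N R)"
proof unfold_locales
  show "finite (ground (free_product N R))"
    using N R by (simp add: indep_system.finite_ground)
  show "{} \<in> indeps (free_product N R)"
    using indep_system.empty_indep[OF N] indep_system.rk_mono[OF N, of "{}" "ground N"]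
    by (simp add: indeps_free_product nullity_def corank_lambda_def)
next
  fix X Y
  assume Y: "Y \<in> indeps (free_product N R)" and "X \<subseteq> Y"
  then have "X \<inter> ground N \<subseteq> Y \<inter> ground N" "X \<inter> ground R \<subseteq> Y \<inter> ground R"
    by auto
  moreover have "finite (Y \<inter> ground R)"
    using R by (simp add: indep_system.finite_ground)
  ultimately have "X \<inter> ground N \<in> indeps N"
    "nullity R (X \<inter> ground R) \<le> nullity R (Y \<inter> ground R)"
    "rk N (X \<inter> ground N) \<le> rk N (Y \<inter> ground N)"
    using Y indep_system.indep_subset[OF N] indep_system.nullity_mono[OF R] indep_system.rk_mono[OF N]
    by (auto simp: indeps_free_product)
  then show "X \<in> indeps (free_product N R)"
    using Y \<open>X \<subseteq> Y\<close> by (auto simp: indeps_free_product corank_lambda_def)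
qed (simp add: indeps_free_product)

locale disjoint_indep_systems = N: indep_system N + R: indep_system R
  for N R :: "'a matroid" +
  assumes disjoint: "ground N \<inter> ground R = {}"
begin

sublocale P: indep_system "free_product N R"
  using N.indep_system_axioms R.indep_system_axioms by (rule indep_system_free_product)

lemma card_split: "Z \<in> indeps (free_product N R) \<Longrightarrow> card Z = card (Z \<inter> ground N) + card (Z \<inter> ground R)"
  using P.finite_indep P.indep_subset_ground disjoint by (intro card_Int_disjoint_Un) auto

lemma indep_free_product_iff_card:
  "Z \<in> indeps (free_product N R) \<longleftrightarrow> Z \<subseteq> ground N \<union> ground R \<and> Z \<inter> ground N \<in> indeps N \<and>
     card Z \<le> rk N (ground N) + rk R (Z \<inter> ground R)"
proof (cases "Z \<subseteq> ground N \<union> ground R \<and> Z \<inter> ground N \<in> indeps N")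
  case True
  have "finite Z"
    using True N.finite_ground R.finite_ground finite_subset by blast
  then have "card Z = card (Z \<inter> ground N) + card (Z \<inter> ground R)"
    using True disjoint by (intro card_Int_disjoint_Un) auto
  moreover have "rk N (Z \<inter> ground N) = card (Z \<inter> ground N)"
    using True N.rk_indep by blast
  ultimately show ?thesis
    using True by (auto simp: indeps_free_product nullity_def corank_lambda_def)
qed (auto simp: indeps_free_product)

lemma circuit_free_product:
  assumes C: "circuit (free_product N R) C" "C \<inter> ground R \<noteq> {}"
  shows "C \<inter> ground N \<in> indeps N" "rk N (ground N) + rk R (C \<inter> ground R) < card C"
proof -
  obtain t where t: "t \<in> C" "t \<in> ground R"
    using C(2) by blast
  have "C - {t} \<in> indeps (free_product N R)"
    using C(1) t(1) by (auto simp: circuit_def)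
  moreover have "(C - {t}) \<inter> ground N = C \<inter> ground N"
    using t disjoint by blast
  ultimately show "C \<inter> ground N \<in> indeps N"
    by (simp add: indep_free_product_iff_card)
  then show "rk N (ground N) + rk R (C \<inter> ground R) < card C"
    using C(1) by (auto simp: circuit_def indep_free_product_iff_card)
qed

lemma indep_free_product_swap:
  assumes J: "J \<in> indeps (free_product N R)" and s: "s \<in> J \<inter> ground N" and t: "t \<in> ground R - J"
  shows "insert t (J - {s}) \<in> indeps (free_product N R)"
proof -
  let ?J' = "insert t (J - {s})"
  have J_split: "J \<subseteq> ground N \<union> ground R" "J \<inter> ground N \<in> indeps N"
    "card J \<le> rk N (ground N) + rk R (J \<inter> ground R)"
    using J by (simp_all add: indep_free_product_iff_card)
  have "?J' \<inter> ground N = J \<inter> ground N - {s}"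
    using t disjoint by blast
  then have "?J' \<inter> ground N \<in> indeps N"
    using N.indep_subset[OF J_split(2), of "J \<inter> ground N - {s}"] by auto
  moreover have "card ?J' = card J"
    using s t P.finite_indep[OF J] card_gt_0_iff[of J] by (auto simp: card_insert_if)
  moreover have "rk R (J \<inter> ground R) \<le> rk R (?J' \<inter> ground R)"
    using s disjoint by (intro R.rk_mono) blast
  moreover have "?J' \<subseteq> ground N \<union> ground R"
    using J_split(1) t by blast
  ultimately show ?thesis
    using J_split(3) unfolding indep_free_product_iff_card by simp
qed

lemma exists_indep_free_product_in_circuit:
  assumes C: "circuit (free_product N R) C" "C \<inter> ground R \<noteq> {}"
    and J: "J \<in> indeps (free_product N R)" "C \<inter> ground R \<subseteq> J"
  shows "\<exists>J' \<subseteq> (C \<inter> ground N) \<union> (J \<inter> ground R). J' \<in> indeps (free_product N R) \<and> card J' = card J"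
proof -
  have J_bound: "card J \<le> rk N (ground N) + rk R (J \<inter> ground R)"
    using J(1) by (simp add: indep_free_product_iff_card)
  have "nullity R (C \<inter> ground R) \<le> nullity R (J \<inter> ground R)"
    using J(2) R.finite_ground by (intro R.nullity_mono) auto
  moreover have "card C = card (C \<inter> ground N) + card (C \<inter> ground R)"
    using C(1) finite_subset[OF _ P.finite_ground] disjoint
    by (intro card_Int_disjoint_Un) (auto simp: circuit_def)
  ultimately have "card (J \<inter> ground N) \<le> card (C \<inter> ground N)"
    using circuit_free_product(2)[OF C] J_bound card_split[OF J(1)] by (simp add: nullity_def)
  then obtain X where X: "X \<subseteq> C \<inter> ground N" "card X = card (J \<inter> ground N)"
    by (meson obtain_subset_with_card_n)
  let ?J' = "X \<union> (J \<inter> ground R)"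
  have "finite X"
    using X(1) finite_subset[OF _ N.finite_ground] by blast
  moreover have "finite (J \<inter> ground R)" "X \<inter> (J \<inter> ground R) = {}"
    using X(1) R.finite_ground disjoint by auto
  ultimately have card_J': "card ?J' = card J"
    using X(2) card_split[OF J(1)] by (simp add: card_Un_disjoint)
  have J'_N: "?J' \<inter> ground N = X" and J'_R: "?J' \<inter> ground R = J \<inter> ground R"
    using X(1) disjoint by auto
  have "X \<in> indeps N"
    using X(1) circuit_free_product(1)[OF C] N.indep_subset by blast
  moreover have "?J' \<subseteq> ground N \<union> ground R"
    using X(1) by blast
  moreover have "card ?J' \<le> rk N (ground N) + rk R (?J' \<inter> ground R)"
    using J_bound unfolding card_J' J'_R .
  ultimately have "?J' \<in> indeps (free_product N R)"
    unfolding indep_free_product_iff_card J'_N by (intro conjI)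
  then show ?thesis
    using X(1) card_J' by (intro exI[of _ ?J']) blast
qed

text \<open>A circuit reaching into \<open>ground R\<close> spans all of \<open>ground N\<close>: an independent set can
  trade an element of \<open>ground N\<close> either for a new element of \<open>ground R\<close> or for elements of the circuit.\<close>
lemma rk_insert_free_product_le:
  assumes C: "circuit (free_product N R) C" "C \<inter> ground R \<noteq> {}" "C \<subseteq> F"
    and F: "F \<subseteq> ground N \<union> ground R" and s: "s \<in> ground N"
  shows "rk (free_product N R) (insert s F) \<le> rk (free_product N R) F"
proof -
  obtain J where J: "J \<in> indeps (free_product N R)" "J \<subseteq> insert s F"
    "card J = rk (free_product N R) (insert s F)"
    by (rule P.obtain_rk_indep)
  have "\<exists>J' \<in> indeps (free_product N R). J' \<subseteq> F \<and> card J' = card J"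
  proof (cases "s \<in> J")
    case True
    consider t where "t \<in> F \<inter> ground R - J" | "F \<inter> ground R \<subseteq> J"
      by blast
    then show ?thesis
    proof cases
      case 1
      then show ?thesis
        using indep_free_product_swap[OF J(1), of s t] True s J(2) P.finite_indep[OF J(1)]
          card_gt_0_iff[of J]
        by (intro bexI[of _ "insert t (J - {s})"]) (auto simp: card_insert_if)
    next
      case 2
      then obtain J' where "J' \<subseteq> (C \<inter> ground N) \<union> (J \<inter> ground R)"
        "J' \<in> indeps (free_product N R)" "card J' = card J"
        using exists_indep_free_product_in_circuit[OF C(1,2) J(1)] C(3) by blast
      moreover have "J \<inter> ground R \<subseteq> F"
        using J(2) s disjoint by auto
      ultimately show ?thesis
        using C(3) by blast
    qed
  next
    case False
    then show ?thesis
      using J(1,2) by (intro bexI[of _ J]) auto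
  qed
  then show ?thesis
    using J(3) P.card_le_rk by metis
qed

lemma free_separator_free_product: "free_separator (free_product N R) (ground N)"
  unfolding free_separator_def
proof (intro conjI allI impI)
  fix F
  assume F: "cyclic_flat (free_product N R) F"
  then have flat: "flat (free_product N R) F"
    by (simp add: cyclic_flat_def)
  show "F \<subseteq> ground N \<or> ground N \<subseteq> F"
  proof (rule disjCI)
    assume "\<not> ground N \<subseteq> F"
    then obtain s where s: "s \<in> ground N" "s \<notin> F"
      by blast
    show "F \<subseteq> ground N"
    proof (rule ccontr)
      assume "\<not> F \<subseteq> ground N"
      then obtain t where t: "t \<in> F" "t \<notin> ground N"
        by blast
      then obtain C where C: "circuit (free_product N R) C" "t \<in> C" "C \<subseteq> F"
        using F by (auto simp: cyclic_flat_def)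
      have "t \<in> ground R"
        using flat t by (auto simp: flat_def)
      then have "rk (free_product N R) (insert s F) \<le> rk (free_product N R) F"
        using flat C s by (intro rk_insert_free_product_le) (auto simp: flat_def)
      moreover have "rk (free_product N R) F < rk (free_product N R) (insert s F)"
        using flat s by (simp add: flat_def)
      ultimately show False
        by linarith
    qed
  qed
qed auto

end

lemma disjoint_indep_systemsI:
  "indep_system N \<Longrightarrow> indep_system R \<Longrightarrow> ground N \<inter> ground R = {} \<Longrightarrow> disjoint_indep_systems N R"
  by (simp add: disjoint_indep_systems_def disjoint_indep_systems_axioms_def)

lemma ground_empty_matroid [simp]: "ground empty_matroid = {}"
  and indeps_empty_matroid [simp]: "indeps empty_matroid = {{}}"
  by (simp_all add: empty_matroid_def)

lemma indep_system_empty_matroid: "indep_system empty_matroid"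
  by unfold_locales auto

lemma rk_empty_matroid [simp]: "rk empty_matroid X = 0"
  by (simp add: rk_def)

lemma empty_matroid_if_ground_empty: "indep_system N \<Longrightarrow> ground N = {} \<Longrightarrow> N = empty_matroid"
  by (rule matroid_eqI) (auto dest: indep_system.indep_subset_ground intro: indep_system.empty_indep)

lemma free_product_empty_matroid_right:
  assumes N: "indep_system N"
  shows "free_product N empty_matroid = N"
proof (rule matroid_eqI)
  interpret disjoint_indep_systems N empty_matroid
    using N indep_system_empty_matroid by (rule disjoint_indep_systemsI) simp
  have "Z \<in> indeps (free_product N empty_matroid) \<longleftrightarrow> Z \<in> indeps N" for Z
    using N.indep_subset_ground N.rk_indep N.rk_mono[of Z "ground N"]
    by (auto simp: indep_free_product_iff_card Int_absorb2)
  then show "indeps (free_product N empty_matroid) = indeps N"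
    by blast
qed simp

lemma free_product_empty_matroid_left:
  assumes R: "indep_system R"
  shows "free_product empty_matroid R = R"
proof (rule matroid_eqI)
  interpret disjoint_indep_systems empty_matroid R
    using indep_system_empty_matroid R by (rule disjoint_indep_systemsI) simp
  have "Z \<in> indeps (free_product empty_matroid R) \<longleftrightarrow> Z \<in> indeps R" for Z
  proof -
    have "Z \<in> indeps (free_product empty_matroid R) \<longleftrightarrow> Z \<subseteq> ground R \<and> card Z \<le> rk R Z"
      by (auto simp: indep_free_product_iff_card Int_absorb2)
    also have "\<dots> \<longleftrightarrow> Z \<in> indeps R"
      using R.indep_if_card_le_rk R.rk_indep R.indep_subset_ground R.finite_ground finite_subset
      by (metis dual_order.refl)
    finally show ?thesis .
  qed
  then show "indeps (free_product empty_matroid R) = indeps R"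
    by blast
qed simp

subsection \<open>Free products of lists\<close>

definition disjoint_grounds :: "'a matroid list \<Rightarrow> bool" where
  "disjoint_grounds Ns \<longleftrightarrow>
     (\<forall>i < length Ns. \<forall>j < length Ns. i \<noteq> j \<longrightarrow> ground (Ns ! i) \<inter> ground (Ns ! j) = {})"

lemma disjoint_grounds_Cons:
  assumes "disjoint_grounds (N # Ns)"
  shows "disjoint_grounds Ns" "R \<in> set Ns \<Longrightarrow> ground N \<inter> ground R = {}"
proof -
  show "disjoint_grounds Ns"
    using assms unfolding disjoint_grounds_def
    by (metis Suc_inject Suc_mono length_Cons nth_Cons_Suc)
  assume "R \<in> set Ns"
  then obtain j where "j < length Ns" "Ns ! j = R"
    by (meson in_set_conv_nth)
  then show "ground N \<inter> ground R = {}"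
    using assms unfolding disjoint_grounds_def
    by (metis Suc_less_eq length_Cons nat.distinct(1) nth_Cons_0 nth_Cons_Suc zero_less_Suc)
qed

lemma free_product_list_Nil [simp]: "free_product_list [] = empty_matroid"
  and free_product_list_Cons [simp]:
    "free_product_list (N # Ns) = free_product N (free_product_list Ns)"
  by (simp_all add: free_product_list_def)

lemma ground_free_product_list: "ground (free_product_list Ns) = (\<Union>N \<in> set Ns. ground N)"
  by (induction Ns) auto

lemma indep_system_free_product_list:
  "\<forall>N \<in> set Ns. indep_system N \<Longrightarrow> indep_system (free_product_list Ns)"
  by (induction Ns) (auto intro: indep_system_free_product indep_system_empty_matroid)

lemma free_product_list_factor_or_free_separator:
  assumes "\<forall>N \<in> set Ns. indep_system N" "disjoint_grounds Ns"
  shows "free_product_list Ns \<in> set Ns \<or> ground (free_product_list Ns) = {} \<or>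
    (\<exists>A. free_separator (free_product_list Ns) A \<and> A \<noteq> {} \<and> A \<noteq> ground (free_product_list Ns))"
  using assms
proof (induction Ns)
  case (Cons N Ns)
  define R where "R = free_product_list Ns"
  have N: "indep_system N" and R: "indep_system R"
    using Cons.prems indep_system_free_product_list by (auto simp: R_def)
  have disj: "ground N \<inter> ground R = {}"
    using disjoint_grounds_Cons(2)[OF Cons.prems(2)] by (auto simp: R_def ground_free_product_list)
  consider "ground N = {}" | "ground R = {}" | "ground N \<noteq> {}" "ground R \<noteq> {}"
    by blast
  then show ?case
  proof cases
    case 1
    then have "free_product_list (N # Ns) = R"
      using empty_matroid_if_ground_empty[OF N] free_product_empty_matroid_left[OF R] by (simp add: R_def)
    moreover have "R \<in> set Ns \<or> ground R = {} \<or> (\<exists>A. free_separator R A \<and> A \<noteq> {} \<and> A \<noteq> ground R)"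
      using Cons disjoint_grounds_Cons(1)[OF Cons.prems(2)] by (simp add: R_def)
    ultimately show ?thesis
      by auto
  next
    case 2
    then have "free_product_list (N # Ns) = N"
      using empty_matroid_if_ground_empty[OF R] free_product_empty_matroid_right[OF N] by (simp add: R_def)
    then show ?thesis
      by simp
  next
    case 3
    then have "ground N \<noteq> ground (free_product N R)"
      using disj by auto
    then show ?thesis
      using disjoint_indep_systems.free_separator_free_product[OF disjoint_indep_systemsI[OF N R disj]] 3
      by (auto simp: R_def)
  qed
qed simp

subsection \<open>Irreducibility\<close>

context matroid
begin

lemma card_le_rk_basis_Un:
  assumes B: "B \<in> indeps M" "B \<subseteq> A" "card B = rk M A" and Z: "Z \<in> indeps M"
  shows "card Z \<le> rk M (B \<union> (Z - A))"
proof -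
  obtain J where J: "B \<subseteq> J" "J \<subseteq> B \<union> Z" "J \<in> indeps M" "card Z \<le> card J"
    using augment_to_card[OF B(1) Z] by blast
  have "J \<inter> A \<subseteq> B"
  proof
    fix y
    assume y: "y \<in> J \<inter> A"
    show "y \<in> B"
    proof (rule ccontr)
      assume "y \<notin> B"
      have "insert y B \<in> indeps M"
        using J(1,3) y by (intro indep_subset[OF J(3)]) auto
      then have "card (insert y B) \<le> rk M A"
        using B(2) y by (intro card_le_rk) auto
      then show False
        using \<open>y \<notin> B\<close> B(3) finite_indep[OF B(1)] by simp
    qed
  qed
  then have "J \<subseteq> B \<union> (Z - A)"
    using J(2) by blast
  then show ?thesis
    using J(4) card_le_rk[OF J(3)] by (meson order_trans)
qed

lemma indep_if_card_le_rk_Un_free_separator: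
  assumes sep: "free_separator M A" and "B \<subseteq> A"
    and Z: "Z \<subseteq> ground M" "Z \<inter> A \<in> indeps M" "card Z \<le> rk M (B \<union> (Z - A))"
  shows "Z \<in> indeps M"
proof (rule ccontr)
  assume "Z \<notin> indeps M"
  then obtain C where C: "C \<subseteq> Z" "circuit M C"
    using exists_circuit_subset[OF Z(1)] by blast
  have CS: "C \<subseteq> ground M"
    using C(1) Z(1) by blast
  have "\<not> C \<subseteq> A"
    using C indep_subset[OF Z(2), of C] by (auto simp: circuit_def)
  then have "A \<subseteq> cl M C"
    using sep cyclic_flat_cl_circuit[OF C(2)] subset_cl[OF CS] by (auto simp: free_separator_def)
  then have "B \<union> (Z - A) \<subseteq> cl M C \<union> (Z - C)"
    using \<open>B \<subseteq> A\<close> subset_cl[OF CS] by blast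
  then have "rk M (B \<union> (Z - A)) \<le> rk M (cl M C \<union> (Z - C))"
    by (rule rk_mono)
  also have "\<dots> \<le> rk M (cl M C) + card (Z - C)"
    using Z(1) finite_ground finite_subset by (intro rk_Un_le) blast
  also have "\<dots> = (card C - 1) + (card Z - card C)"
    using rk_cl[OF CS] rk_circuit[OF C(2)] card_Diff_subset[OF finite_circuit[OF C(2)] C(1)] by simp
  finally have "rk M (B \<union> (Z - A)) \<le> (card C - 1) + (card Z - card C)" .
  moreover have "1 \<le> card C"
    using circuit_nonempty[OF C(2)] finite_circuit[OF C(2)] by (simp add: Suc_le_eq card_gt_0_iff)
  moreover have "card C \<le> card Z"
    using C(1) Z(1) finite_ground finite_subset by (intro card_mono) blast+
  ultimately show False
    using Z(3) by linarith
qed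

lemma free_product_restriction_contraction:
  assumes sep: "free_separator M A" and B: "B \<in> indeps M" "B \<subseteq> A" "card B = rk M A"
  shows "free_product (restriction M A) (contraction M A B) = M"
proof (rule matroid_eqI)
  have A: "A \<subseteq> ground M"
    using sep by (simp add: free_separator_def)
  then show "ground (free_product (restriction M A) (contraction M A B)) = ground M"
    by auto
  have disj: "ground (restriction M A) \<inter> ground (contraction M A B) = {}"
    by auto
  note indep_iff = disjoint_indep_systems.indep_free_product_iff_card[OF disjoint_indep_systemsI[OF
      matroid.axioms(1)[OF matroid_restriction[OF A]]
      matroid.axioms(1)[OF matroid_contraction[OF B(1,2)]] disj]]
  have "Z \<in> indeps (free_product (restriction M A) (contraction M A B)) \<longleftrightarrow> Z \<in> indeps M" for Z
  proof (cases "Z \<subseteq> ground M")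
    case True
    have "rk (contraction M A B) (Z - A) = rk M (B \<union> (Z - A)) - rk M A"
      using rk_contraction[OF B(1,2), of "Z - A"] True B(3) by (auto simp: Un_commute)
    moreover have "rk M A \<le> rk M (B \<union> (Z - A))"
      using B card_le_rk[of B] by simp
    moreover have "Z \<inter> (ground M - A) = Z - A"
      using True by blast
    ultimately have "Z \<in> indeps (free_product (restriction M A) (contraction M A B)) \<longleftrightarrow>
        Z \<inter> A \<in> indeps M \<and> card Z \<le> rk M (B \<union> (Z - A))"
      using True A by (auto simp: indep_iff rk_restriction indeps_restriction)
    also have "\<dots> \<longleftrightarrow> Z \<in> indeps M"
      using card_le_rk_basis_Un[OF B] indep_if_card_le_rk_Un_free_separator[OF sep B(2) True]
        indep_subset by blast
    finally show ?thesis .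
  next
    case False
    then show ?thesis
      using A indep_subset_ground by (auto simp: indep_iff)
  qed
  then show "indeps (free_product (restriction M A) (contraction M A B)) = indeps M"
    by blast
qed

lemma free_separator_trivial_if_irreducible:
  assumes irreducible: "irreducible_fp M" and sep: "free_separator M A"
  shows "A = {} \<or> A = ground M"
proof -
  have A: "A \<subseteq> ground M"
    using sep by (simp add: free_separator_def)
  obtain B where B: "B \<in> indeps M" "B \<subseteq> A" "card B = rk M A"
    by (rule obtain_rk_indep)
  define Ns where "Ns = [restriction M A, contraction M A B]"
  have "free_product_list Ns = M"
    using free_product_restriction_contraction[OF sep B]
      free_product_empty_matroid_right[OF matroid.axioms(1)[OF matroid_contraction[OF B(1,2)]]]
    by (simp add: Ns_def)
  moreover have "\<forall>N \<in> set Ns. is_matroid N"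
    using matroid_restriction[OF A] matroid_contraction[OF B(1,2)] by (simp add: Ns_def is_matroid_iff_matroid)
  moreover have "disjoint_grounds Ns"
    by (auto simp: disjoint_grounds_def Ns_def less_Suc_eq)
  ultimately have "M \<in> set Ns"
    using irreducible by (auto simp: irreducible_fp_def disjoint_grounds_def)
  then have "ground M \<in> ground ` set Ns"
    by blast
  then have "ground M = A \<or> ground M = ground M - A"
    by (simp add: Ns_def)
  then show ?thesis
    using A by blast
qed

end

lemma irreducible_if_free_separators_trivial:
  assumes "ground M \<noteq> {}" and "\<forall>A. free_separator M A \<longrightarrow> A = {} \<or> A = ground M"
  shows "irreducible_fp M"
  unfolding irreducible_fp_def
proof (intro conjI allI impI)
  fix Ns :: "'a matroid list"
  assume "\<forall>N \<in> set Ns. is_matroid N"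
    and "\<forall>i < length Ns. \<forall>j < length Ns. i \<noteq> j \<longrightarrow> ground (Ns ! i) \<inter> ground (Ns ! j) = {}"
    and M: "free_product_list Ns = M"
  then have "free_product_list Ns \<in> set Ns \<or> ground (free_product_list Ns) = {} \<or>
    (\<exists>A. free_separator (free_product_list Ns) A \<and> A \<noteq> {} \<and> A \<noteq> ground (free_product_list Ns))"
    by (intro free_product_list_factor_or_free_separator)
      (auto simp: disjoint_grounds_def is_matroid_iff_matroid dest: matroid.axioms(1))
  then show "M \<in> set Ns"
    using M assms by auto
qed (rule assms(1))

theorem theorem6p4:
  fixes M :: "'a matroid"
  assumes "is_matroid M" and "ground M \<noteq> {}"
  shows "irreducible_fp M \<longleftrightarrow>
           (\<forall>A. free_separator M A \<longrightarrow> A = {} \<or> A = ground M)"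
proof
  interpret matroid M
    using assms(1) by (simp add: is_matroid_iff_matroid)
  show "\<forall>A. free_separator M A \<longrightarrow> A = {} \<or> A = ground M" if "irreducible_fp M"
    using free_separator_trivial_if_irreducible[OF that] by blast
  show "irreducible_fp M" if "\<forall>A. free_separator M A \<longrightarrow> A = {} \<or> A = ground M"
    using irreducible_if_free_separators_trivial[OF assms(2) that] .
qed

end
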